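(* Assume (FWW) for a flow $\Phi_t$ on $\mathbb{R}^n$ and a $k$-cone $C$. Let $\mathcal{D}\subset\mathbb{R}^n$ be open and $\omega$-compact, let $x\in\mathcal{D}$, and consider the $k$-exponential separation of $(\Phi_t,D\Phi_t)$ along $\omega(x)$ associated with $C$. Assume $\lambda_{kz}>0$ for every $z\in\omega(x)$. Then there exists a constant $\delta>0$ such that $$\limsup_{t\to+\infty}\|\Phi_t(y)-\Phi_t(x)\|\ge\delta$$ whenever $y\ne x$ and $y\sim x$.
   Context: A closed set $C\subset\mathbb{R}^n$ is a $k$-cone if $lv\in C$ for all $v\in C$, $l\in\mathbb{R}$, and the maximal dimension of a linear subspace contained in $C$ is $k$. $C$ is $k$-solid if there is a $k$-dimensional subspace $W$ with $W\setminus\{0\}\subset\operatorname{Int}C$. Write $x\sim y$ if $x-y\in C$ and $x\approx y$ if $x-y\in\operatorname{Int}C$. A flow $\Phi_t$ is strongly monotone with respect to a $k$-solid cone $C$ if $x\sim y$ implies $\Phi_t(x)\sim\Phi_t(y)$ for $t\ge0$, and $x\ne y$, $x\sim y$ imply $\Phi_t(x)\approx\Phi_t(y)$ for $t>0$. Assumption (FWW): the flow $\Phi_t$ on $\mathbb{R}^n$ is $C^{1,\alpha}$-smooth ($C^1$ with locally $\alpha$-Hölder derivative, $\alpha\in(0,1]$), strongly monotone with respect to the $k$-cone $C$, and $D_x\Phi_t(C\setminus\{0\})\subset\operatorname{Int}C$ for $t>0$. A set $\mathcal{D}$ is $\omega$-compact if every forward orbit from $\mathcal{D}$ is bounded and $\bigcup_{x\in\mathcal{D}}\omega(x)$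 is bounded. A $k$-exponential separation along a compact invariant set $K$ associated with $C$ consists of continuous (in the Grassmannian gap metric) families of $k$-dimensional subspaces $E_y$ and $(n-k)$-dimensional subspaces $F_y$, $y\in K$, with $\mathbb{R}^n=E_y\oplus F_y$, $D_y\Phi_tE_y=E_{\Phi_t(y)}$, $D_y\Phi_tF_y\subset F_{\Phi_t(y)}$ ($t>0$), constants $M>0$, $0<\gamma<1$ with $\|D_y\Phi_tw\|\le M\gamma^t\|D_y\Phi_tv\|$ for unit $w\in F_y$, $v\in E_y$, $t\ge0$, and $E_y\subset\operatorname{Int}C\cup\{0\}$, $F_y\cap C=\{0\}$; under (FWW) such a separation exists along every compact invariant set. The $k$-Lyapunov exponent is $\lambda_{kz}=\limsup_{t\to+\infty}t^{-1}\log\inf_{v\in E_z,\|v\|=1}\|D_z\Phi_tv\|$. *)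

theory Defs
  imports "HOL-Analysis.Analysis"
begin

type_synonym 'n flow = "real \<Rightarrow> real^'n \<Rightarrow> real^'n"

definition Dflow :: "'n::finite flow \<Rightarrow> real \<Rightarrow> real^'n \<Rightarrow> real^'n \<Rightarrow> real^'n" where
  "Dflow \<Phi> t x = frechet_derivative (\<Phi> t) (at x)"

definition is_flow :: "'n::finite flow \<Rightarrow> bool" where
  "is_flow \<Phi> \<longleftrightarrow> (\<forall>x. \<Phi> 0 x = x) \<and> (\<forall>s t x. \<Phi> (s + t) x = \<Phi> s (\<Phi> t x))
     \<and> continuous_on UNIV (\<lambda>(t, x). \<Phi> t x)"

definition C1_alpha_flow :: "real \<Rightarrow> 'n::finite flow \<Rightarrow> bool" where
  "C1_alpha_flow \<alpha> \<Phi> \<longleftrightarrow> is_flow \<Phi> \<and>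
     (\<forall>t x. \<Phi> t differentiable (at x)) \<and>
     (\<forall>t x. \<exists>r>0. \<exists>L. \<forall>y\<in>ball x r. \<forall>z\<in>ball x r.
         onorm (\<lambda>v. Dflow \<Phi> t y v - Dflow \<Phi> t z v) \<le> L * dist y z powr \<alpha>)"

definition k_cone :: "nat \<Rightarrow> (real^'n::finite) set \<Rightarrow> bool" where
  "k_cone k C \<longleftrightarrow> closed C \<and> (\<forall>v\<in>C. \<forall>l::real. l *\<^sub>R v \<in> C) \<and>
     (\<exists>W. subspace W \<and> W \<subseteq> C \<and> dim W = k) \<and>
     (\<forall>W. subspace W \<and> W \<subseteq> C \<longrightarrow> dim W \<le> k)"

definition k_solid :: "nat \<Rightarrow> (real^'n::finite) set \<Rightarrow> bool" where
  "k_solid k C \<longleftrightarrow> (\<exists>W. subspace W \<and> dim W = k \<and> W - {0} \<subseteq> interior C)"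

definition strongly_monotone :: "'n::finite flow \<Rightarrow> (real^'n) set \<Rightarrow> bool" where
  "strongly_monotone \<Phi> C \<longleftrightarrow>
     (\<forall>x y t. x - y \<in> C \<and> t \<ge> 0 \<longrightarrow> \<Phi> t x - \<Phi> t y \<in> C) \<and>
     (\<forall>x y t. x \<noteq> y \<and> x - y \<in> C \<and> t > 0 \<longrightarrow> \<Phi> t x - \<Phi> t y \<in> interior C)"

definition FWW :: "'n::finite flow \<Rightarrow> nat \<Rightarrow> (real^'n) set \<Rightarrow> bool" where
  "FWW \<Phi> k C \<longleftrightarrow> (\<exists>\<alpha>. 0 < \<alpha> \<and> \<alpha> \<le> 1 \<and> C1_alpha_flow \<alpha> \<Phi>) \<and>
     k_cone k C \<and> k_solid k C \<and> strongly_monotone \<Phi> C \<and>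
     (\<forall>t>0. \<forall>x. Dflow \<Phi> t x ` (C - {0}) \<subseteq> interior C)"

definition omega_limit :: "'n::finite flow \<Rightarrow> real^'n \<Rightarrow> (real^'n) set" where
  "omega_limit \<Phi> x = {y. \<exists>s::nat \<Rightarrow> real. filterlim s at_top sequentially \<and>
                           (\<lambda>m. \<Phi> (s m) x) \<longlonglongrightarrow> y}"

definition omega_compact :: "'n::finite flow \<Rightarrow> (real^'n) set \<Rightarrow> bool" where
  "omega_compact \<Phi> D \<longleftrightarrow> (\<forall>x\<in>D. bounded ((\<lambda>t. \<Phi> t x) ` {0..})) \<and>
     bounded (\<Union>x\<in>D. omega_limit \<Phi> x)"

definition gap :: "(real^'n::finite) set \<Rightarrow> (real^'n) set \<Rightarrow> real" where
  "gap U V = max (Sup ({0} \<union> (\<lambda>u. infdist u V) ` {u\<in>U. norm u = 1}))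
                 (Sup ({0} \<union> (\<lambda>v. infdist v U) ` {v\<in>V. norm v = 1}))"

definition gap_continuous_on :: "(real^'n::finite) set \<Rightarrow> (real^'n \<Rightarrow> (real^'n) set) \<Rightarrow> bool" where
  "gap_continuous_on K E \<longleftrightarrow> (\<forall>y\<in>K. \<forall>\<epsilon>>0. \<exists>d>0. \<forall>y'\<in>K. dist y' y < d \<longrightarrow> gap (E y') (E y) < \<epsilon>)"

definition exp_separation ::
  "'n::finite flow \<Rightarrow> nat \<Rightarrow> (real^'n) set \<Rightarrow> (real^'n) set \<Rightarrow>
   (real^'n \<Rightarrow> (real^'n) set) \<Rightarrow> (real^'n \<Rightarrow> (real^'n) set) \<Rightarrow> bool" where
  "exp_separation \<Phi> k C K E F \<longleftrightarrow>
     gap_continuous_on K E \<and> gap_continuous_on K F \<and>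
     (\<forall>y\<in>K. subspace (E y) \<and> dim (E y) = k \<and> subspace (F y) \<and> dim (F y) = CARD('n) - k \<and>
              E y + F y = UNIV \<and> E y \<inter> F y = {0}) \<and>
     (\<forall>y\<in>K. \<forall>t>0. Dflow \<Phi> t y ` E y = E (\<Phi> t y) \<and> Dflow \<Phi> t y ` F y \<subseteq> F (\<Phi> t y)) \<and>
     (\<exists>M>0. \<exists>\<gamma>. 0 < \<gamma> \<and> \<gamma> < 1 \<and>
        (\<forall>y\<in>K. \<forall>t\<ge>0. \<forall>w\<in>F y. \<forall>v\<in>E y. norm w = 1 \<and> norm v = 1 \<longrightarrow>
            norm (Dflow \<Phi> t y w) \<le> M * \<gamma> powr t * norm (Dflow \<Phi> t y v))) \<and>
     (\<forall>y\<in>K. E y \<subseteq> interior C \<union> {0} \<and> F y \<inter> C = {0})"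

definition lyap_k :: "'n::finite flow \<Rightarrow> (real^'n \<Rightarrow> (real^'n) set) \<Rightarrow> real^'n \<Rightarrow> ereal" where
  "lyap_k \<Phi> E z = Limsup at_top (\<lambda>t. ereal (ln (INF v\<in>{v\<in>E z. norm v = 1}. norm (Dflow \<Phi> t z v)) / t))"

end

theory Submission
  imports Defs
begin

(* Near a point z of the omega-limit set, a cone vector splits along E z + F z into a part in E z
   that is bounded below by a fixed fraction of the vector (F z meets the cone only in 0) and a part
   in F z whose growth is exponentially dominated by that of E z. A positive k-Lyapunov exponent
   therefore yields a time T at which the derivative stretches every cone vector threefold, and by
   continuity of the derivative the time-T map stretches cone-ordered pairs near z twofold.
   The forward orbit of x eventually stays uniformly deep inside such neighbourhoods, and the
   cone is forward invariant; so if Phi_t y stayed closer to Phi_t x than that depth, their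
   distance would keep doubling along the orbit, which is absurd. *)

lemma exists_projection_along_complement:
  fixes E F :: "'a::real_vector set"
  assumes sE: "subspace E" and sF: "subspace F" and EF: "E + F = UNIV" and EF0: "E \<inter> F = {0}"
  obtains P where "linear P" "\<And>v. P v \<in> E" "\<And>v. v - P v \<in> F"
proof -
  have ex: "\<exists>e. e \<in> E \<and> v - e \<in> F" for v
  proof -
    obtain a b where "v = a + b" "a \<in> E" "b \<in> F"
      using EF set_plus_elim[of v E F] by auto
    then show ?thesis by (intro exI[of _ a]) auto
  qed
  have uniq: "e1 = e2" if "e1 \<in> E" "v - e1 \<in> F" "e2 \<in> E" "v - e2 \<in> F" for v e1 e2
  proof -
    have "e1 - e2 \<in> E" using that sE by (simp add: subspace_diff)
    moreover have "(v - e2) - (v - e1) \<in> F" using subspace_diff[OF sF that(4) that(2)] .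
    ultimately have "e1 - e2 \<in> E \<inter> F" by (simp add: algebra_simps)
    then show ?thesis using EF0 by auto
  qed
  define P where "P v = (THE e. e \<in> E \<and> v - e \<in> F)" for v
  have P: "P v \<in> E" "v - P v \<in> F" for v
    using theI'[of "\<lambda>e. e \<in> E \<and> v - e \<in> F"] ex uniq unfolding P_def by blast+
  have P_eq: "P v = e" if "e \<in> E" "v - e \<in> F" for v e
    using uniq[OF P that] .
  have "linear P"
  proof (rule linearI)
    fix a b
    have "(a - P a) + (b - P b) \<in> F" using P sF by (simp add: subspace_add)
    then show "P (a + b) = P a + P b"
      using P sE by (intro P_eq) (simp_all add: subspace_add algebra_simps)
  next
    fix r :: real and a
    have "r *\<^sub>R (a - P a) \<in> F" using P sF by (simp add: subspace_scale)
    then show "P (r *\<^sub>R a) = r *\<^sub>R P a"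
      using P sE by (intro P_eq) (simp_all add: subspace_scale algebra_simps)
  qed
  then show ?thesis using that P by blast
qed

lemma linear_norm_bounded_below_on_cone:
  fixes P :: "'a::euclidean_space \<Rightarrow> 'b::real_normed_vector"
  assumes "linear P" and "closed C" and cone: "\<forall>v\<in>C. \<forall>l::real. l *\<^sub>R v \<in> C"
    and ker: "\<And>v. v \<in> C \<Longrightarrow> P v = 0 \<Longrightarrow> v = 0"
  obtains c where "c > 0" "\<And>v. v \<in> C \<Longrightarrow> c * norm v \<le> norm (P v)"
proof -
  define S where "S = C \<inter> sphere 0 1"
  have "compact S" unfolding S_def using \<open>closed C\<close> by (simp add: closed_Int_compact)
  have cont: "continuous_on S (\<lambda>v. norm (P v))"
    using \<open>linear P\<close> by (intro continuous_intros) (simp add: linear_continuous_on linear_conv_bounded_linear)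
  obtain c where "c > 0" and c: "\<And>v. v \<in> S \<Longrightarrow> c \<le> norm (P v)"
  proof (cases "S = {}")
    case True
    then show ?thesis using that[of 1] by auto
  next
    case False
    then obtain v0 where v0: "v0 \<in> S" "\<And>v. v \<in> S \<Longrightarrow> norm (P v0) \<le> norm (P v)"
      using continuous_attains_inf[OF \<open>compact S\<close> False cont] by blast
    then have "P v0 \<noteq> 0" using ker unfolding S_def by fastforce
    then show ?thesis using that[of "norm (P v0)"] v0 by auto
  qed
  have "c * norm v \<le> norm (P v)" if v: "v \<in> C" for v
  proof (cases "v = 0")
    case False
    then have "(1 / norm v) *\<^sub>R v \<in> S" unfolding S_def using v cone by auto
    then have "c \<le> norm (P ((1 / norm v) *\<^sub>R v))" by (rule c)
    also have "\<dots> = norm (P v) / norm v" using linear_scale[OF \<open>linear P\<close>] by simp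
    finally show ?thesis using False by (simp add: field_simps)
  qed (simp add: linear_0[OF \<open>linear P\<close>])
  with \<open>c > 0\<close> show ?thesis by (rule that)
qed

lemma unit_sphere_subspace_nonempty:
  assumes "subspace E" and "E \<noteq> {0}"
  shows "{v\<in>E. norm v = 1} \<noteq> {}"
proof -
  obtain e where "e \<in> E" "e \<noteq> 0" using assms subspace_0 by blast
  then have "(1 / norm e) *\<^sub>R e \<in> {v\<in>E. norm v = 1}" using assms by (simp add: subspace_scale)
  then show ?thesis by blast
qed

lemma Inf_unit_sphere_mult_norm_le:
  fixes A :: "'a::real_normed_vector \<Rightarrow> 'b::real_normed_vector"
  assumes "linear A" and "subspace E" and "e \<in> E"
  shows "(INF v\<in>{v\<in>E. norm v = 1}. norm (A v)) * norm e \<le> norm (A e)"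
proof (cases "e = 0")
  case False
  then have "(1 / norm e) *\<^sub>R e \<in> {v\<in>E. norm v = 1}"
    using assms by (simp add: subspace_scale)
  then have "(INF v\<in>{v\<in>E. norm v = 1}. norm (A v)) \<le> norm (A ((1 / norm e) *\<^sub>R e))"
    by (intro cINF_lower) (auto intro: bdd_belowI[of _ 0])
  also have "\<dots> = norm (A e) / norm e" using linear_scale[OF \<open>linear A\<close>] by simp
  finally show ?thesis using False by (simp add: field_simps)
qed simp

lemma norm_le_mult_Inf_unit_sphere:
  fixes A :: "'a::real_normed_vector \<Rightarrow> 'b::real_normed_vector"
  assumes "linear A" and "subspace E" and "subspace F" and "E \<noteq> {0}" and "K > 0"
    and sep: "\<forall>w\<in>F. \<forall>v\<in>E. norm w = 1 \<and> norm v = 1 \<longrightarrow> norm (A w) \<le> K * norm (A v)"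
    and "f \<in> F"
  shows "norm (A f) \<le> K * (INF v\<in>{v\<in>E. norm v = 1}. norm (A v)) * norm f"
proof (cases "f = 0")
  case False
  define u where "u = (1 / norm f) *\<^sub>R f"
  have u: "u \<in> F" "norm u = 1" using assms False by (auto simp: u_def subspace_scale)
  have "norm (A u) / K \<le> (INF v\<in>{v\<in>E. norm v = 1}. norm (A v))"
    using unit_sphere_subspace_nonempty[OF \<open>subspace E\<close> \<open>E \<noteq> {0}\<close>] sep u \<open>K > 0\<close>
    by (intro cINF_greatest) (auto simp: field_simps)
  moreover have "norm (A u) = norm (A f) / norm f" using linear_scale[OF \<open>linear A\<close>] by (simp add: u_def)
  ultimately show ?thesis using \<open>K > 0\<close> False by (simp add: field_simps)
qed (simp add: linear_0[OF \<open>linear A\<close>])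

lemma norm_ge_of_dominated_splitting:
  fixes A :: "'a::real_normed_vector \<Rightarrow> 'b::real_normed_vector"
  assumes lin: "linear A" and sE: "subspace E" and sF: "subspace F" and "E \<noteq> {0}" and "K > 0"
    and sep: "\<forall>w\<in>F. \<forall>v\<in>E. norm w = 1 \<and> norm v = 1 \<longrightarrow> norm (A w) \<le> K * norm (A v)"
    and "e \<in> E" and "v - e \<in> F" and "c * norm v \<le> norm e" and "norm (v - e) \<le> B * norm v"
    and "K * B \<le> c / 2"
  shows "(INF u\<in>{u\<in>E. norm u = 1}. norm (A u)) * (c / 2) * norm v \<le> norm (A v)"
proof -
  define m where "m = (INF u\<in>{u\<in>E. norm u = 1}. norm (A u))"
  have "0 \<le> m"
    using unit_sphere_subspace_nonempty[OF sE \<open>E \<noteq> {0}\<close>] unfolding m_def by (intro cINF_greatest) auto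
  have "m * (c * norm v) \<le> norm (A e)"
    using Inf_unit_sphere_mult_norm_le[OF lin sE \<open>e \<in> E\<close>] \<open>c * norm v \<le> norm e\<close> \<open>0 \<le> m\<close>
    unfolding m_def by (meson mult_left_mono order_trans)
  moreover have "norm (A (v - e)) \<le> m * (c / 2 * norm v)"
  proof -
    have "norm (A (v - e)) \<le> K * m * norm (v - e)"
      using norm_le_mult_Inf_unit_sphere[OF lin sE sF \<open>E \<noteq> {0}\<close> \<open>K > 0\<close> sep \<open>v - e \<in> F\<close>]
      unfolding m_def .
    also have "\<dots> \<le> K * m * (B * norm v)"
      using \<open>norm (v - e) \<le> B * norm v\<close> \<open>K > 0\<close> \<open>0 \<le> m\<close> by (intro mult_left_mono) auto
    also have "\<dots> = m * ((K * B) * norm v)" by (simp add: algebra_simps)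
    also have "\<dots> \<le> m * (c / 2 * norm v)"
      using \<open>K * B \<le> c / 2\<close> \<open>0 \<le> m\<close> by (intro mult_left_mono mult_right_mono) auto
    finally show ?thesis .
  qed
  moreover have "norm (A v) \<ge> norm (A e) - norm (A (v - e))"
    using norm_triangle_ineq2[of "A e" "- A (v - e)"] linear_add[OF lin, of e "v - e"] by simp
  ultimately show ?thesis unfolding m_def[symmetric] by (simp add: algebra_simps)
qed

lemma frequently_gt_of_Limsup_ln_div_pos:
  fixes g :: "real \<Rightarrow> real"
  assumes nonneg: "\<And>t. 0 \<le> g t" and pos: "Limsup at_top (\<lambda>t. ereal (ln (g t) / t)) > 0"
  shows "frequently (\<lambda>t. R < g t) at_top"
proof -
  obtain a where "0 < a" and a: "ereal a < Limsup at_top (\<lambda>t. ereal (ln (g t) / t))"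
    using ereal_dense2[OF pos] by (metis ereal_less(2))
  then obtain y where "y > ereal a" and not_ev: "\<not> eventually (\<lambda>t. y > ereal (ln (g t) / t)) at_top"
    using Limsup_le_iff[of at_top "\<lambda>t. ereal (ln (g t) / t)" "ereal a"] by (auto simp: not_le)
  have "frequently (\<lambda>t. a < ln (g t) / t) at_top"
    using not_ev[unfolded not_eventually] by (rule frequently_elim1)
      (use \<open>y > ereal a\<close> in \<open>metis less_le_trans not_less ereal_less_eq(3)\<close>)
  moreover have "eventually (\<lambda>t. t \<ge> max 1 (ln (max R 1) / a)) at_top" by (rule eventually_ge_at_top)
  ultimately have "frequently (\<lambda>t. a < ln (g t) / t \<and> t \<ge> max 1 (ln (max R 1) / a)) at_top"
    by (rule frequently_eventually_frequently)
  then show ?thesis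
  proof (rule frequently_elim1)
    fix t assume "a < ln (g t) / t \<and> t \<ge> max 1 (ln (max R 1) / a)"
    then have "a * t < ln (g t)" and "ln (max R 1) \<le> a * t"
      using \<open>0 < a\<close> by (auto simp: field_simps)
    moreover have "0 \<le> ln (max R 1)" by simp
    ultimately have "ln (max R 1) < ln (g t)" and "0 < ln (g t)" by linarith+
    then have "0 < g t" using nonneg[of t] by (metis ln_0 order.strict_iff_order)
    with \<open>ln (max R 1) < ln (g t)\<close> show "R < g t" by simp
  qed
qed

lemma eventually_powr_le_at_top:
  fixes \<gamma> \<epsilon> :: real
  assumes "0 < \<gamma>" "\<gamma> < 1" "\<epsilon> > 0"
  shows "eventually (\<lambda>t. \<gamma> powr t \<le> \<epsilon>) at_top"
proof (rule eventually_at_top_linorderI[of "ln \<epsilon> / ln \<gamma>"])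
  fix t assume t: "ln \<epsilon> / ln \<gamma> \<le> t"
  have "ln \<gamma> < 0" using assms by simp
  then have "t * ln \<gamma> \<le> ln \<epsilon>"
    using mult_right_mono_neg[OF t, of "ln \<gamma>"] by simp
  then show "\<gamma> powr t \<le> \<epsilon>" using assms by (simp add: powr_def ln_le_cancel_iff[symmetric])
qed

lemma exists_time_expanding_cone:
  fixes A :: "real \<Rightarrow> 'a::euclidean_space \<Rightarrow> 'b::real_normed_vector"
  assumes lin: "\<And>t. linear (A t)"
    and sE: "subspace E" and sF: "subspace F" and "E + F = UNIV" and "E \<inter> F = {0}" and "E \<noteq> {0}"
    and "closed C" and cone: "\<forall>v\<in>C. \<forall>l::real. l *\<^sub>R v \<in> C" and FC: "F \<inter> C = {0}"
    and "M > 0" and "0 < \<gamma>" and "\<gamma> < 1"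
    and sep: "\<forall>t\<ge>0. \<forall>w\<in>F. \<forall>v\<in>E. norm w = 1 \<and> norm v = 1 \<longrightarrow>
                norm (A t w) \<le> M * \<gamma> powr t * norm (A t v)"
    and lyap: "Limsup at_top (\<lambda>t. ereal (ln (INF v\<in>{v\<in>E. norm v = 1}. norm (A t v)) / t)) > 0"
  shows "\<exists>T>0. \<forall>v\<in>C. \<kappa> * norm v \<le> norm (A T v)"
proof -
  obtain P where "linear P" and P: "\<And>v. P v \<in> E" "\<And>v. v - P v \<in> F"
    using exists_projection_along_complement[OF sE sF \<open>E + F = UNIV\<close> \<open>E \<inter> F = {0}\<close>] by blast
  have "v = 0" if "v \<in> C" "P v = 0" for v
    using P(2)[of v] that FC by auto
  then obtain c where "c > 0" and c: "\<And>v. v \<in> C \<Longrightarrow> c * norm v \<le> norm (P v)"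
    using linear_norm_bounded_below_on_cone[OF \<open>linear P\<close> \<open>closed C\<close> cone] by blast
  obtain K where "K > 0" and K: "\<And>v. norm (P v) \<le> norm v * K"
    using \<open>linear P\<close> bounded_linear.pos_bounded linear_conv_bounded_linear by blast
  define B where "B = 1 + K"
  have "B > 0" using \<open>K > 0\<close> by (simp add: B_def)
  have B: "norm (v - P v) \<le> B * norm v" for v
    using norm_triangle_ineq4[of v "P v"] K[of v] by (simp add: B_def algebra_simps)
  define m where "m t = (INF v\<in>{v\<in>E. norm v = 1}. norm (A t v))" for t
  have "0 \<le> m t" for t
    using unit_sphere_subspace_nonempty[OF sE \<open>E \<noteq> {0}\<close>] unfolding m_def by (intro cINF_greatest) auto
  then have "frequently (\<lambda>t. 2 * \<bar>\<kappa>\<bar> / c < m t) at_top"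
    using lyap by (intro frequently_gt_of_Limsup_ln_div_pos) (simp_all add: m_def)
  moreover have "eventually (\<lambda>t. 0 < t \<and> \<gamma> powr t \<le> c / (2 * M * B)) at_top"
    using \<open>c > 0\<close> \<open>M > 0\<close> \<open>B > 0\<close> \<open>0 < \<gamma>\<close> \<open>\<gamma> < 1\<close>
    by (intro eventually_conj eventually_gt_at_top eventually_powr_le_at_top) auto
  ultimately obtain T where "0 < T" and mT: "2 * \<bar>\<kappa>\<bar> / c < m T"
    and \<gamma>T: "\<gamma> powr T \<le> c / (2 * M * B)"
    using frequently_ex[OF frequently_eventually_frequently] by blast
  have "M * \<gamma> powr T * B \<le> M * (c / (2 * M * B)) * B"
    using \<gamma>T \<open>M > 0\<close> \<open>B > 0\<close> by (intro mult_left_mono mult_right_mono) auto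
  then have small: "M * \<gamma> powr T * B \<le> c / 2" using \<open>M > 0\<close> \<open>B > 0\<close> by simp
  have "\<kappa> * norm v \<le> norm (A T v)" if "v \<in> C" for v
  proof -
    have "\<bar>\<kappa>\<bar> \<le> m T * (c / 2)" using mT \<open>c > 0\<close> by (simp add: field_simps)
    then have "\<kappa> * norm v \<le> m T * (c / 2) * norm v"
      by (meson abs_ge_self mult_right_mono norm_ge_zero order_trans)
    also have "\<dots> \<le> norm (A T v)"
      using norm_ge_of_dominated_splitting[OF lin sE sF \<open>E \<noteq> {0}\<close> _ _ P(1) P(2) c[OF that] B small]
        sep \<open>0 < T\<close> \<open>M > 0\<close> \<open>0 < \<gamma>\<close> unfolding m_def by simp
    finally show ?thesis .
  qed
  with \<open>0 < T\<close> show ?thesis by blast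
qed

lemma holder_imp_onorm_continuous_at:
  fixes D :: "'a::real_normed_vector \<Rightarrow> 'a \<Rightarrow> 'b::real_normed_vector"
  assumes "0 < \<alpha>"
    and "\<exists>r>0. \<exists>L. \<forall>y\<in>ball z r. \<forall>y'\<in>ball z r. onorm (\<lambda>v. D y v - D y' v) \<le> L * dist y y' powr \<alpha>"
  shows "\<forall>\<epsilon>>0. \<exists>r>0. \<forall>y\<in>ball z r. onorm (\<lambda>v. D y v - D z v) \<le> \<epsilon>"
proof (intro allI impI)
  fix \<epsilon> :: real assume "\<epsilon> > 0"
  obtain r L where "r > 0"
    and L: "\<forall>y\<in>ball z r. \<forall>y'\<in>ball z r. onorm (\<lambda>v. D y v - D y' v) \<le> L * dist y y' powr \<alpha>"
    using assms(2) by blast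
  define r' where "r' = min r ((\<epsilon> / (\<bar>L\<bar> + 1)) powr (1 / \<alpha>))"
  have "r' > 0" using \<open>r > 0\<close> \<open>\<epsilon> > 0\<close> by (simp add: r'_def)
  have "r' powr \<alpha> \<le> ((\<epsilon> / (\<bar>L\<bar> + 1)) powr (1 / \<alpha>)) powr \<alpha>"
    unfolding r'_def using \<open>r > 0\<close> \<open>\<epsilon> > 0\<close> \<open>0 < \<alpha>\<close> by (intro powr_mono2) auto
  also have "\<dots> = \<epsilon> / (\<bar>L\<bar> + 1)" using \<open>0 < \<alpha>\<close> \<open>\<epsilon> > 0\<close> by (simp add: powr_powr)
  finally have r'_powr: "r' powr \<alpha> \<le> \<epsilon> / (\<bar>L\<bar> + 1)" .
  have "onorm (\<lambda>v. D y v - D z v) \<le> \<epsilon>" if y: "y \<in> ball z r'" for y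
  proof -
    have "y \<in> ball z r" "z \<in> ball z r" using y \<open>r > 0\<close> by (auto simp: r'_def)
    then have "onorm (\<lambda>v. D y v - D z v) \<le> L * dist y z powr \<alpha>" using L by blast
    also have "\<dots> \<le> \<bar>L\<bar> * r' powr \<alpha>"
      using y \<open>0 < \<alpha>\<close> by (intro mult_mono powr_mono2) (auto simp: dist_commute)
    also have "\<dots> \<le> \<bar>L\<bar> * (\<epsilon> / (\<bar>L\<bar> + 1))" using r'_powr by (intro mult_left_mono) auto
    also have "\<dots> \<le> \<epsilon>" using \<open>\<epsilon> > 0\<close> by (simp add: field_simps)
    finally show ?thesis .
  qed
  with \<open>r' > 0\<close> show "\<exists>r>0. \<forall>y\<in>ball z r. onorm (\<lambda>v. D y v - D z v) \<le> \<epsilon>" by blast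
qed

lemma local_cone_expansion:
  fixes f :: "'a::real_normed_vector \<Rightarrow> 'b::real_normed_vector"
  assumes deriv: "\<And>y. (f has_derivative f' y) (at y)"
    and cont: "\<forall>\<epsilon>>0. \<exists>r>0. \<forall>y\<in>ball z r. onorm (\<lambda>v. f' y v - f' z v) \<le> \<epsilon>"
    and expand: "\<forall>v\<in>C. \<kappa> * norm v \<le> norm (f' z v)" and "\<epsilon> > 0"
  shows "\<exists>\<rho>>0. \<forall>p\<in>ball z \<rho>. \<forall>q\<in>ball z \<rho>. q - p \<in> C \<longrightarrow>
           (\<kappa> - \<epsilon>) * norm (q - p) \<le> norm (f q - f p)"
proof -
  obtain \<rho> where "\<rho> > 0" and \<rho>: "\<forall>y\<in>ball z \<rho>. onorm (\<lambda>v. f' y v - f' z v) \<le> \<epsilon>"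
    using cont \<open>\<epsilon> > 0\<close> by blast
  have "(\<kappa> - \<epsilon>) * norm (q - p) \<le> norm (f q - f p)"
    if p: "p \<in> ball z \<rho>" and q: "q \<in> ball z \<rho>" and "q - p \<in> C" for p q
  proof -
    have "p + t *\<^sub>R (q - p) \<in> ball z \<rho>" if "t \<in> {0..1}" for t
    proof -
      have "(1 - t) *\<^sub>R p + t *\<^sub>R q \<in> ball z \<rho>"
        using convexD[OF convex_ball p q, of "1 - t" t] that by auto
      then show ?thesis by (simp add: algebra_simps)
    qed
    then have "norm (f q - f p - f' z (q - p)) \<le> norm (q - p) * \<epsilon>"
      using \<rho> \<open>\<rho> > 0\<close> deriv
      by (intro differentiable_bound_linearization[where S = "ball z \<rho>"])
         (auto simp: fun_diff_def has_derivative_at_withinI)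
    moreover have "\<kappa> * norm (q - p) \<le> norm (f' z (q - p))" using expand \<open>q - p \<in> C\<close> by blast
    moreover have "norm (f' z (q - p)) \<le> norm (f q - f p) + norm (f q - f p - f' z (q - p))"
      using norm_triangle_ineq4[of "f q - f p" "f q - f p - f' z (q - p)"] by simp
    ultimately show ?thesis by (simp add: algebra_simps)
  qed
  with \<open>\<rho> > 0\<close> show ?thesis by blast
qed

lemma flow_inj:
  assumes "is_flow \<Phi>" and "\<Phi> t x = \<Phi> t y"
  shows "x = y"
proof -
  have "\<Phi> (- t + t) x = \<Phi> (- t + t) y"
    using assms unfolding is_flow_def by metis
  then show ?thesis using assms(1) unfolding is_flow_def by simp
qed

lemma omega_limit_subsequence:
  fixes \<Phi> :: "'n::finite flow"
  assumes bounded: "bounded ((\<lambda>t. \<Phi> t x) ` {0..})" and s_ge: "\<And>m. real m \<le> s m"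
  obtains l r where "strict_mono r" "(\<lambda>m. \<Phi> (s (r m)) x) \<longlonglongrightarrow> l" "l \<in> omega_limit \<Phi> x"
proof -
  have "range (\<lambda>m. \<Phi> (s m) x) \<subseteq> (\<lambda>t. \<Phi> t x) ` {0..}"
    using s_ge by (auto intro!: imageI) (meson of_nat_0_le_iff order_trans)
  then have "bounded (range (\<lambda>m. \<Phi> (s m) x))" using bounded_subset[OF bounded] by blast
  from bounded_imp_convergent_subsequence[OF this] obtain l r
    where "strict_mono r" and "((\<lambda>m. \<Phi> (s m) x) \<circ> r) \<longlonglongrightarrow> l" by blast
  then have lim: "(\<lambda>m. \<Phi> (s (r m)) x) \<longlonglongrightarrow> l" by (simp add: o_def)
  have "real m \<le> s (r m)" for m
    using s_ge[of "r m"] seq_suble[OF \<open>strict_mono r\<close>, of m] by (meson of_nat_le_iff order_trans)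
  then have "filterlim (\<lambda>m. s (r m)) at_top sequentially"
    by (intro filterlim_at_top_mono[OF filterlim_real_sequentially]) auto
  with lim have "l \<in> omega_limit \<Phi> x" unfolding omega_limit_def by blast
  with \<open>strict_mono r\<close> lim show ?thesis by (rule that)
qed

lemma omega_limit_eventually_near:
  fixes \<Phi> :: "'n::finite flow"
  assumes bounded: "bounded ((\<lambda>t. \<Phi> t x) ` {0..})"
    and pos: "\<And>z. z \<in> omega_limit \<Phi> x \<Longrightarrow> \<rho> z > 0"
  shows "\<exists>\<eta>>0. eventually (\<lambda>t. \<exists>z\<in>omega_limit \<Phi> x. \<eta> \<le> \<rho> z \<and> dist (\<Phi> t x) z < \<rho> z) at_top"
proof (rule ccontr)
  assume contra: "\<not> ?thesis"
  have "\<exists>t\<ge>real m. \<forall>z\<in>omega_limit \<Phi> x. 1 / (real m + 1) \<le> \<rho> z \<longrightarrow> \<rho> z \<le> dist (\<Phi> t x) z"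
    for m :: nat
  proof -
    have "1 / (real m + 1) > 0" by simp
    then have "\<not> eventually (\<lambda>t. \<exists>z\<in>omega_limit \<Phi> x. 1 / (real m + 1) \<le> \<rho> z \<and> dist (\<Phi> t x) z < \<rho> z) at_top"
      using contra by blast
    then show ?thesis unfolding eventually_at_top_linorder by (auto simp: not_less)
  qed
  then obtain s where s_ge: "\<And>m. s m \<ge> real m"
    and s_far: "\<And>m z. z \<in> omega_limit \<Phi> x \<Longrightarrow> 1 / (real m + 1) \<le> \<rho> z \<Longrightarrow> \<rho> z \<le> dist (\<Phi> (s m) x) z"
    by metis
  obtain l r where "strict_mono r" and lim: "(\<lambda>m. \<Phi> (s (r m)) x) \<longlonglongrightarrow> l" and l: "l \<in> omega_limit \<Phi> x"
    using omega_limit_subsequence[of \<Phi> x s, OF bounded s_ge] by blast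
  obtain n :: nat where "n > 0" "inverse (real n) < \<rho> l"
    using pos[OF l] ex_inverse_of_nat_less by blast
  obtain N where "\<And>m. m \<ge> N \<Longrightarrow> dist (\<Phi> (s (r m)) x) l < \<rho> l"
    using tendstoD[OF lim pos[OF l]] unfolding eventually_sequentially by blast
  moreover define m where "m = max N n"
  moreover have "real n \<le> real (r m) + 1"
    using seq_suble[OF \<open>strict_mono r\<close>, of m] by (simp add: m_def)
  then have "1 / (real (r m) + 1) \<le> inverse (real n)"
    using \<open>n > 0\<close> by (simp add: field_simps)
  ultimately have "dist (\<Phi> (s (r m)) x) l < \<rho> l" "1 / (real (r m) + 1) \<le> \<rho> l"
    using \<open>inverse (real n) < \<rho> l\<close> by auto
  then show False using s_far[OF l] by fastforce
qed

lemma Limsup_ge_of_doubling: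
  fixes g :: "real \<Rightarrow> real"
  assumes pos: "\<And>t. t \<ge> t1 \<Longrightarrow> 0 < g t"
    and doubling: "\<And>t. t \<ge> t1 \<Longrightarrow> g t < \<eta> \<Longrightarrow> \<exists>s\<ge>t. 2 * g t \<le> g s"
  shows "ereal \<eta> \<le> Limsup at_top (\<lambda>t. ereal (g t))"
proof (rule ccontr)
  assume "\<not> ?thesis"
  then have "Limsup at_top (\<lambda>t. ereal (g t)) < ereal \<eta>" by simp
  then have "eventually (\<lambda>t. g t < \<eta>) at_top" by (auto dest: Limsup_lessD)
  then obtain t2 where small: "\<And>t. t \<ge> t2 \<Longrightarrow> g t < \<eta>" unfolding eventually_at_top_linorder by blast
  define t0 where "t0 = max t1 t2"
  have grow: "\<exists>s\<ge>t0. 2 ^ j * g t0 \<le> g s" for j :: nat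
  proof (induction j)
    case (Suc j)
    then obtain s where "s \<ge> t0" "2 ^ j * g t0 \<le> g s" by blast
    moreover obtain s' where "s' \<ge> s" "2 * g s \<le> g s'"
      using doubling[of s] small[of s] \<open>s \<ge> t0\<close> by (auto simp: t0_def)
    ultimately show ?case by (intro exI[of _ s']) auto
  qed auto
  obtain j :: nat where "\<eta> / g t0 < 2 ^ j"
    using real_arch_pow[of 2 "\<eta> / g t0"] by auto
  then have "\<eta> < 2 ^ j * g t0" using pos[of t0] by (simp add: t0_def field_simps)
  moreover obtain s where "s \<ge> t0" "2 ^ j * g t0 \<le> g s" using grow by blast
  ultimately show False using small[of s] by (simp add: t0_def)
qed

lemma Limsup_dist_ge_of_expansion_near_omega_limit:
  fixes \<Phi> :: "'n::finite flow"
  assumes flow: "is_flow \<Phi>" and bounded: "bounded ((\<lambda>t. \<Phi> t x) ` {0..})"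
    and invariant: "\<And>a b t. a - b \<in> C \<Longrightarrow> 0 \<le> t \<Longrightarrow> \<Phi> t a - \<Phi> t b \<in> C"
    and expanding: "\<And>z. z \<in> omega_limit \<Phi> x \<Longrightarrow> 0 \<le> T z \<and> 0 < \<rho> z \<and>
         (\<forall>p\<in>ball z (\<rho> z). \<forall>q\<in>ball z (\<rho> z). q - p \<in> C \<longrightarrow>
            2 * norm (q - p) \<le> norm (\<Phi> (T z) q - \<Phi> (T z) p))"
  shows "\<exists>\<delta>>0. \<forall>y. y \<noteq> x \<and> y - x \<in> C \<longrightarrow>
           ereal \<delta> \<le> Limsup at_top (\<lambda>t. ereal (norm (\<Phi> t y - \<Phi> t x)))"
proof -
  obtain \<eta> t1 where "\<eta> > 0"
    and near: "\<And>t. t \<ge> t1 \<Longrightarrow> \<exists>z\<in>omega_limit \<Phi> x. \<eta> \<le> \<rho> z / 2 \<and> dist (\<Phi> t x) z < \<rho> z / 2"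
    using omega_limit_eventually_near[of \<Phi> x "\<lambda>z. \<rho> z / 2", OF bounded] expanding
    unfolding eventually_at_top_linorder by force
  have "ereal \<eta> \<le> Limsup at_top (\<lambda>t. ereal (norm (\<Phi> t y - \<Phi> t x)))"
    if y: "y \<noteq> x" "y - x \<in> C" for y
  proof (rule Limsup_ge_of_doubling)
    fix t assume t: "max 0 t1 \<le> t"
    show "0 < norm (\<Phi> t y - \<Phi> t x)" using flow_inj[OF flow] y by force
    assume small: "norm (\<Phi> t y - \<Phi> t x) < \<eta>"
    obtain z where z: "z \<in> omega_limit \<Phi> x" "\<eta> \<le> \<rho> z / 2" "dist (\<Phi> t x) z < \<rho> z / 2"
      using near t by force
    have "dist (\<Phi> t y) z \<le> norm (\<Phi> t y - \<Phi> t x) + dist (\<Phi> t x) z"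
      using dist_triangle[of "\<Phi> t y" z "\<Phi> t x"] by (simp add: dist_norm)
    then have "dist (\<Phi> t x) z < \<rho> z" "dist (\<Phi> t y) z < \<rho> z"
      using z small zero_le_dist[of "\<Phi> t x" z] by linarith+
    then have "\<Phi> t x \<in> ball z (\<rho> z)" "\<Phi> t y \<in> ball z (\<rho> z)" by (simp_all add: dist_commute)
    moreover have "\<Phi> t y - \<Phi> t x \<in> C" using invariant y t by simp
    ultimately have "2 * norm (\<Phi> t y - \<Phi> t x) \<le> norm (\<Phi> (T z) (\<Phi> t y) - \<Phi> (T z) (\<Phi> t x))"
      using expanding[OF z(1)] by blast
    also have "\<dots> = norm (\<Phi> (T z + t) y - \<Phi> (T z + t) x)"
      using flow unfolding is_flow_def by simp
    finally show "\<exists>s\<ge>t. 2 * norm (\<Phi> t y - \<Phi> t x) \<le> norm (\<Phi> s y - \<Phi> s x)"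
      using expanding[OF z(1)] by (intro exI[of _ "T z + t"]) auto
  qed
  with \<open>\<eta> > 0\<close> show ?thesis by blast
qed

lemma exp_separation_locally_expanding:
  fixes \<Phi> :: "'n::finite flow"
  assumes fww: "FWW \<Phi> k C" and "1 \<le> k" and sep: "exp_separation \<Phi> k C K E F"
    and "z \<in> K" and lyap: "lyap_k \<Phi> E z > 0"
  shows "\<exists>T>0. \<exists>\<rho>>0. \<forall>p\<in>ball z \<rho>. \<forall>q\<in>ball z \<rho>. q - p \<in> C \<longrightarrow>
           2 * norm (q - p) \<le> norm (\<Phi> T q - \<Phi> T p)"
proof -
  obtain \<alpha> where "0 < \<alpha>" and C1: "C1_alpha_flow \<alpha> \<Phi>" using fww unfolding FWW_def by blast
  then have deriv: "(\<Phi> t has_derivative Dflow \<Phi> t y) (at y)" for t y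
    unfolding C1_alpha_flow_def Dflow_def using frechet_derivative_works by blast
  have "closed C" and cone: "\<forall>v\<in>C. \<forall>l::real. l *\<^sub>R v \<in> C"
    using fww unfolding FWW_def k_cone_def by auto
  obtain M \<gamma> where "M > 0" "0 < \<gamma>" "\<gamma> < 1"
    and sepz: "\<forall>t\<ge>0. \<forall>w\<in>F z. \<forall>v\<in>E z. norm w = 1 \<and> norm v = 1 \<longrightarrow>
                 norm (Dflow \<Phi> t z w) \<le> M * \<gamma> powr t * norm (Dflow \<Phi> t z v)"
    using sep \<open>z \<in> K\<close> unfolding exp_separation_def by meson
  have EF: "subspace (E z)" "subspace (F z)" "E z + F z = UNIV" "E z \<inter> F z = {0}"
    and "dim (E z) = k" and "F z \<inter> C = {0}"
    using sep \<open>z \<in> K\<close> unfolding exp_separation_def by auto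
  then have "E z \<noteq> {0}" using \<open>1 \<le> k\<close> by auto
  obtain T where "T > 0" and expand: "\<forall>v\<in>C. 3 * norm v \<le> norm (Dflow \<Phi> T z v)"
    using exists_time_expanding_cone[OF has_derivative_linear[OF deriv] EF \<open>E z \<noteq> {0}\<close>
        \<open>closed C\<close> cone \<open>F z \<inter> C = {0}\<close> \<open>M > 0\<close> \<open>0 < \<gamma>\<close> \<open>\<gamma> < 1\<close> sepz]
      lyap unfolding lyap_k_def by blast
  have "\<forall>\<epsilon>>0. \<exists>r>0. \<forall>y\<in>ball z r. onorm (\<lambda>v. Dflow \<Phi> T y v - Dflow \<Phi> T z v) \<le> \<epsilon>"
    using holder_imp_onorm_continuous_at[OF \<open>0 < \<alpha>\<close>] C1 unfolding C1_alpha_flow_def by blast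
  from local_cone_expansion[OF deriv this expand, of 1] \<open>T > 0\<close> show ?thesis by auto
qed

theorem lemma4p4:
  fixes \<Phi> :: "real \<Rightarrow> real^'n \<Rightarrow> real^'n"
    and C D :: "(real^'n) set" and k :: nat and x :: "real^'n"
    and E F :: "real^'n \<Rightarrow> (real^'n) set"
  assumes "FWW \<Phi> k C" and "1 \<le> k"
    and "open D" and "omega_compact \<Phi> D" and "x \<in> D"
    and "exp_separation \<Phi> k C (omega_limit \<Phi> x) E F"
    and "\<forall>z\<in>omega_limit \<Phi> x. lyap_k \<Phi> E z > 0"
  shows "\<exists>\<delta>>0. \<forall>y. y \<noteq> x \<and> y - x \<in> C \<longrightarrow>
            Limsup at_top (\<lambda>t. ereal (norm (\<Phi> t y - \<Phi> t x))) \<ge> ereal \<delta>"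
proof -
  have flow: "is_flow \<Phi>"
    using assms(1) unfolding FWW_def C1_alpha_flow_def by blast
  have bounded: "bounded ((\<lambda>t. \<Phi> t x) ` {0..})"
    using assms(4,5) unfolding omega_compact_def by blast
  have invariant: "\<And>a b t. a - b \<in> C \<Longrightarrow> 0 \<le> t \<Longrightarrow> \<Phi> t a - \<Phi> t b \<in> C"
    using assms(1) unfolding FWW_def strongly_monotone_def by blast
  have "\<forall>z\<in>omega_limit \<Phi> x. \<exists>T>0. \<exists>\<rho>>0. \<forall>p\<in>ball z \<rho>. \<forall>q\<in>ball z \<rho>. q - p \<in> C \<longrightarrow>
          2 * norm (q - p) \<le> norm (\<Phi> T q - \<Phi> T p)"
    using exp_separation_locally_expanding[OF assms(1,2,6)] assms(7) by blast
  then obtain T \<rho> where "\<And>z. z \<in> omega_limit \<Phi> x \<Longrightarrow> 0 \<le> T z \<and> 0 < \<rho> z \<and>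
      (\<forall>p\<in>ball z (\<rho> z). \<forall>q\<in>ball z (\<rho> z). q - p \<in> C \<longrightarrow>
         2 * norm (q - p) \<le> norm (\<Phi> (T z) q - \<Phi> (T z) p))"
    by (metis less_imp_le)
  from Limsup_dist_ge_of_expansion_near_omega_limit[OF flow bounded invariant this]
  show ?thesis by simp
qed

end
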